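(* Let $c\in(0,1)$ and let $\sigma>0$ satisfy $C_{\mathrm{BS}}(\sigma)=c$. Define $$U_{23}(c)=H\!\left(\min\left(\frac{1+c}{2},\; c+e^k\,\Phi(-\sqrt{2k})\right)\right).$$ Then $\sigma\le U_{23}(c)$. Moreover, with $U_3(c)=-\Phi^{-1}\!\left(\frac{1-c}{2}\right)-\Phi^{-1}\!\left(\frac{1-c}{2e^k}\right)$ and, for $0<c<1-e^k\Phi(-\sqrt{2k})$, $U_2(c)=\Phi^{-1}\!\left(c+e^k\Phi(-\sqrt{2k})\right)+\sqrt{2k}$, one has $U_{23}(c)=\min(U_2(c),U_3(c))$ whenever $U_2(c)$ is defined, and $U_{23}(c)=U_3(c)$ otherwise.
   Context: Fix $k\ge 0$. Let $\Phi$ and $\phi$ denote the standard normal distribution function and density. For $\sigma>0$ put $d_1(\sigma)=-k/\sigma+\sigma/2$, $d_2(\sigma)=-k/\sigma-\sigma/2$, and $C_{\mathrm{BS}}(\sigma)=\Phi(d_1(\sigma))-e^k\,\Phi(d_2(\sigma))$. The map $C_{\mathrm{BS}}$ is a strictly increasing bijection from $(0,\infty)$ onto $(0,1)$; for $c\in(0,1)$ the implied volatility is the unique $\sigma>0$ with $C_{\mathrm{BS}}(\sigma)=c$. For $c<\mathcal D<1$ define $H(\mathcal D)=\Phi^{-1}(\mathcal D)-\Phi^{-1}\!\left(\frac{\mathcal D-c}{e^k}\right)$. *)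

theory Defs
  imports "HOL-Probability.Probability"
begin

definition Phi :: "real \<Rightarrow> real" where
  "Phi x = cdf (density lborel std_normal_density) x"

definition Phi_inv :: "real \<Rightarrow> real" where
  "Phi_inv p = (THE x. Phi x = p)"

definition d1 :: "real \<Rightarrow> real \<Rightarrow> real" where
  "d1 k \<sigma> = - k / \<sigma> + \<sigma> / 2"

definition d2 :: "real \<Rightarrow> real \<Rightarrow> real" where
  "d2 k \<sigma> = - k / \<sigma> - \<sigma> / 2"

definition C_BS :: "real \<Rightarrow> real \<Rightarrow> real" where
  "C_BS k \<sigma> = Phi (d1 k \<sigma>) - exp k * Phi (d2 k \<sigma>)"

text \<open>H depends on the parameters k and c; meant for c < D < 1.\<close>
definition H :: "real \<Rightarrow> real \<Rightarrow> real \<Rightarrow> real" where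
  "H k c D = Phi_inv D - Phi_inv ((D - c) / exp k)"

definition U23 :: "real \<Rightarrow> real \<Rightarrow> real" where
  "U23 k c = H k c (min ((1 + c) / 2) (c + exp k * Phi (- sqrt (2 * k))))"

definition U3 :: "real \<Rightarrow> real \<Rightarrow> real" where
  "U3 k c = - Phi_inv ((1 - c) / 2) - Phi_inv ((1 - c) / (2 * exp k))"

text \<open>Meant for 0 < c < 1 - exp k * Phi (- sqrt (2 k)).\<close>
definition U2 :: "real \<Rightarrow> real \<Rightarrow> real" where
  "U2 k c = Phi_inv (c + exp k * Phi (- sqrt (2 * k))) + sqrt (2 * k)"

end

theory Submission
  imports Defs "HOL-Real_Asymp.Real_Asymp"
begin

text \<open>
  For every \<open>D \<in> (c, 1)\<close> the points \<open>x = \<Phi>\<^sup>-\<^sup>1(D)\<close>, \<open>y = \<Phi>\<^sup>-\<^sup>1((D - c)/e\<^sup>k)\<close> satisfy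
  \<open>\<Phi>(x) - e\<^sup>k \<Phi>(y) = c\<close>. The profile \<open>t \<mapsto> \<Phi>(t) - e\<^sup>k \<Phi>(t - \<sigma>)\<close> is unimodal with maximum
  \<open>C\<^sub>B\<^sub>S(\<sigma>) = c\<close> at \<open>t = d\<^sub>1(\<sigma>)\<close>; so if \<open>\<sigma> > x - y = H(D)\<close>, then at \<open>t = x\<close> the profile
  would exceed \<open>c\<close>. Thus \<open>\<sigma> \<le> H(D)\<close> for every admissible \<open>D\<close>.

  For the description of \<open>U\<^sub>2\<^sub>3\<close>: by the same unimodality, \<open>H\<close> is nondecreasing to the right
  of any \<open>D\<close> at which \<open>y\<^sup>2 \<le> x\<^sup>2 + 2k\<close>. At \<open>D = c + e\<^sup>k \<Phi>(-\<surd>(2k))\<close> this holds with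
  equality, \<open>y = -\<surd>(2k)\<close>; at \<open>D = (1 + c)/2\<close> it follows from Gordon's Mills-ratio bound
  \<open>z \<Phi>(-z) \<le> \<phi>(z)\<close>. Hence \<open>H\<close> at the smaller of the two points is the smaller value.
\<close>

section \<open>The standard normal distribution function\<close>

lemma continuous_on_std_normal_density: "continuous_on S std_normal_density"
  unfolding std_normal_density_def by (intro continuous_intros) auto

lemma std_normal_density_minus [simp]: "std_normal_density (- x) = std_normal_density x"
  by (simp add: std_normal_density_def)

lemma real_distribution_std_normal: "real_distribution (density lborel std_normal_density)"
  using prob_space_normal_density
  by (auto simp: real_distribution_def real_distribution_axioms_def)

lemma Phi_diff_eq_integral:
  assumes "a < b"
  shows "Phi b - Phi a = integral {a..b} std_normal_density"
proof -
  interpret real_distribution "density lborel std_normal_density"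
    by (rule real_distribution_std_normal)
  have int: "(std_normal_density has_integral integral {a..b} std_normal_density) {a..b}"
    using integrable_continuous_interval[OF continuous_on_std_normal_density]
    by (simp add: has_integral_integral)
  have "(std_normal_density has_integral integral {a..b} std_normal_density) {a<..b}"
    using int by (subst has_integral_spike_set_eq[where S = "{a<..b}" and T = "{a..b}"])
                 (auto intro: negligible_subset[of "{a}"])
  then have "emeasure (density lborel std_normal_density) {a<..b}
      = ennreal (integral {a..b} std_normal_density)"
    by (subst emeasure_density) (auto intro!: nn_integral_has_integral_lebesgue')
  then have "measure (density lborel std_normal_density) {a<..b}
      = integral {a..b} std_normal_density"
    unfolding measure_def using int by (simp add: integral_nonneg has_integral_integrable)
  then show ?thesis
    unfolding Phi_def using cdf_diff_eq[OF assms] by simp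
qed

lemma has_real_derivative_Phi: "(Phi has_real_derivative std_normal_density x) (at x)"
proof -
  define a where "a = x - 1"
  have "((\<lambda>y. integral {a..y} std_normal_density) has_real_derivative std_normal_density x)
      (at x within {a..x + 1})"
    by (rule integral_has_real_derivative[OF continuous_on_std_normal_density]) (auto simp: a_def)
  moreover have "at x within {a..x + 1} = at x"
    by (rule at_within_interior) (simp add: a_def)
  ultimately have "((\<lambda>y. Phi a + integral {a..y} std_normal_density)
      has_real_derivative std_normal_density x) (at x)"
    by (auto intro!: derivative_eq_intros)
  then show ?thesis
  proof (rule has_field_derivative_transform_within_open[where S = "{a<..}"])
    fix y
    assume "y \<in> {a<..}"
    then show "Phi a + integral {a..y} std_normal_density = Phi y"
      using Phi_diff_eq_integral[of a y] by simp
  qed (auto simp: a_def)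
qed

lemma has_real_derivative_Phi_comp [derivative_intros]:
  "(f has_real_derivative f') (at x within S) \<Longrightarrow>
   ((\<lambda>x. Phi (f x)) has_real_derivative std_normal_density (f x) * f') (at x within S)"
  by (rule DERIV_chain2[OF has_real_derivative_Phi])

lemma isCont_Phi: "isCont Phi x"
  using has_real_derivative_Phi DERIV_isCont by blast

lemma std_normal_density_pos: "0 < std_normal_density x"
  by (simp add: normal_density_pos)

lemma strict_mono_Phi: "strict_mono Phi"
proof (rule strict_monoI)
  fix x y :: real
  assume "x < y"
  then show "Phi x < Phi y"
    by (rule DERIV_pos_imp_increasing) (use has_real_derivative_Phi std_normal_density_pos in blast)
qed

lemma Phi_less_iff: "Phi x < Phi y \<longleftrightarrow> x < y"
  by (rule strict_mono_less[OF strict_mono_Phi])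

lemma Phi_le_iff: "Phi x \<le> Phi y \<longleftrightarrow> x \<le> y"
  by (rule strict_mono_less_eq[OF strict_mono_Phi])

lemma Phi_eq_iff: "Phi x = Phi y \<longleftrightarrow> x = y"
  by (rule strict_mono_eq[OF strict_mono_Phi])

lemma tendsto_Phi_at_bot: "(Phi \<longlongrightarrow> 0) at_bot"
  and tendsto_Phi_at_top: "(Phi \<longlongrightarrow> 1) at_top"
  and Phi_nonneg: "0 \<le> Phi x"
proof -
  interpret real_distribution "density lborel std_normal_density"
    by (rule real_distribution_std_normal)
  show "(Phi \<longlongrightarrow> 0) at_bot" "(Phi \<longlongrightarrow> 1) at_top" "0 \<le> Phi x"
    unfolding Phi_def[abs_def]
    by (rule cdf_lim_at_bot cdf_lim_at_top_prob cdf_nonneg)+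
qed

lemma Phi_pos: "0 < Phi x"
  using Phi_less_iff[of "x - 1" x] Phi_nonneg[of "x - 1"] by simp

lemma Phi_surj:
  assumes "0 < p" "p < 1"
  shows "\<exists>x. Phi x = p"
proof -
  obtain a where a: "Phi a < p"
    using order_tendstoD(2)[OF tendsto_Phi_at_bot assms(1)] by (auto simp: eventually_at_bot_linorder)
  obtain b where b: "p < Phi b"
    using order_tendstoD(1)[OF tendsto_Phi_at_top assms(2)] by (auto simp: eventually_at_top_linorder)
  have "a \<le> b"
    using a b Phi_le_iff[of b a] by linarith
  then have "\<exists>x\<ge>a. x \<le> b \<and> Phi x = p"
    using a b isCont_Phi by (intro IVT) auto
  then show ?thesis
    by blast
qed

lemma Phi_inv_Phi [simp]: "Phi_inv (Phi x) = x"
  unfolding Phi_inv_def by (simp add: Phi_eq_iff)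

lemma Phi_Phi_inv:
  assumes "0 < p" "p < 1"
  shows "Phi (Phi_inv p) = p"
  by (metis Phi_surj Phi_inv_Phi assms)

lemma Phi_inv_mono:
  assumes "0 < p" "p \<le> q" "q < 1"
  shows "Phi_inv p \<le> Phi_inv q"
  using assms Phi_le_iff[of "Phi_inv p" "Phi_inv q"] by (simp add: Phi_Phi_inv)

lemma Phi_minus: "Phi (- x) = 1 - Phi x"
proof -
  have "((\<lambda>y. Phi y + Phi (- y)) has_real_derivative 0) (at y)" for y
    by (auto intro!: derivative_eq_intros)
  then have "(\<lambda>y. Phi y + Phi (- y)) = (\<lambda>_. Phi x + Phi (- x))"
    using DERIV_isconst_all by blast
  moreover have "((\<lambda>y. Phi y + Phi (- y)) \<longlongrightarrow> 1 + 0) at_top"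
    by (intro tendsto_add tendsto_Phi_at_top
        filterlim_compose[OF tendsto_Phi_at_bot filterlim_uminus_at_bot_at_top])
  ultimately have "((\<lambda>_ :: real. Phi x + Phi (- x)) \<longlongrightarrow> 1) at_top"
    by simp
  then have "Phi x + Phi (- x) = 1"
    by (simp add: tendsto_const_iff)
  then show ?thesis
    by simp
qed

lemma Phi_inv_one_minus:
  assumes "0 < p" "p < 1"
  shows "Phi_inv (1 - p) = - Phi_inv p"
proof -
  have "Phi (- Phi_inv p) = 1 - p"
    by (simp add: Phi_minus Phi_Phi_inv assms)
  then show ?thesis
    using Phi_inv_Phi by metis
qed

section \<open>The Black--Scholes profile\<close>

text \<open>The normalised call price as a function of \<open>t = d\<^sub>1\<close> at total volatility \<open>s\<close>,
  so that \<open>d\<^sub>2 = t - s\<close>.\<close>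
definition BS_profile :: "real \<Rightarrow> real \<Rightarrow> real \<Rightarrow> real" where
  "BS_profile k s t = Phi t - exp k * Phi (t - s)"

lemma C_BS_eq_BS_profile: "C_BS k s = BS_profile k s (d1 k s)"
  by (simp add: C_BS_def BS_profile_def d1_def d2_def algebra_simps)

lemma BS_profile_strict_mono_volatility:
  "s < s' \<Longrightarrow> BS_profile k s t < BS_profile k s' t"
  by (simp add: BS_profile_def Phi_less_iff)

lemma std_normal_density_diff:
  "std_normal_density (t - s) = std_normal_density t * exp (t * s - s\<^sup>2 / 2)"
proof -
  have "- (t - s)\<^sup>2 / 2 = - t\<^sup>2 / 2 + (t * s - s\<^sup>2 / 2)"
    by (simp add: power2_eq_square field_simps)
  then have "exp (- (t - s)\<^sup>2 / 2) = exp (- t\<^sup>2 / 2) * exp (t * s - s\<^sup>2 / 2)"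
    by (simp only: exp_add)
  then show ?thesis
    by (simp add: std_normal_density_def)
qed

lemma has_real_derivative_BS_profile:
  "(BS_profile k s has_real_derivative
     std_normal_density t * (1 - exp k * exp (t * s - s\<^sup>2 / 2))) (at t)"
proof -
  have "(BS_profile k s has_real_derivative
      std_normal_density t - exp k * std_normal_density (t - s)) (at t)"
    unfolding BS_profile_def [abs_def] by (auto intro!: derivative_eq_intros)
  then show ?thesis
    by (simp add: std_normal_density_diff algebra_simps)
qed

text \<open>The derivative changes sign only at \<open>t = s/2 - k/s = d\<^sub>1\<close>; the hypotheses on \<open>p\<close>
  below say that \<open>p\<close> lies to the right, resp. left, of that point.\<close>

lemma BS_profile_antimono:
  assumes "0 \<le> s" "s\<^sup>2 \<le> 2 * k + 2 * p * s" "p \<le> u" "u \<le> v"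
  shows "BS_profile k s v \<le> BS_profile k s u"
proof (rule DERIV_nonpos_imp_nonincreasing[OF \<open>u \<le> v\<close>])
  fix t
  assume "u \<le> t"
  then have "p * s \<le> t * s"
    using assms by (intro mult_right_mono) auto
  then have "0 \<le> k + (t * s - s\<^sup>2 / 2)"
    using assms(2) by simp
  then have "1 \<le> exp k * exp (t * s - s\<^sup>2 / 2)"
    by (simp add: exp_add[symmetric])
  then have "std_normal_density t * (1 - exp k * exp (t * s - s\<^sup>2 / 2)) \<le> 0"
    by (intro mult_nonneg_nonpos) auto
  then show "\<exists>y. (BS_profile k s has_real_derivative y) (at t) \<and> y \<le> 0"
    using has_real_derivative_BS_profile by blast
qed

lemma BS_profile_mono:
  assumes "0 \<le> s" "2 * k + 2 * p * s \<le> s\<^sup>2" "u \<le> v" "v \<le> p"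
  shows "BS_profile k s u \<le> BS_profile k s v"
proof (rule DERIV_nonneg_imp_nondecreasing[OF \<open>u \<le> v\<close>])
  fix t
  assume "t \<le> v"
  then have "t * s \<le> p * s"
    using assms by (intro mult_right_mono) auto
  then have "k + (t * s - s\<^sup>2 / 2) \<le> 0"
    using assms(2) by simp
  then have "exp k * exp (t * s - s\<^sup>2 / 2) \<le> 1"
    by (simp add: exp_add[symmetric])
  then have "0 \<le> std_normal_density t * (1 - exp k * exp (t * s - s\<^sup>2 / 2))"
    by (intro mult_nonneg_nonneg) auto
  then show "\<exists>y. (BS_profile k s has_real_derivative y) (at t) \<and> 0 \<le> y"
    using has_real_derivative_BS_profile by blast
qed

lemma BS_profile_le_C_BS:
  assumes "0 < s"
  shows "BS_profile k s t \<le> C_BS k s"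
proof -
  have d1: "s\<^sup>2 = 2 * k + 2 * d1 k s * s"
    using assms by (simp add: d1_def power2_eq_square field_simps)
  show ?thesis
    unfolding C_BS_eq_BS_profile
  proof (cases "t \<le> d1 k s")
    case True
    then show "BS_profile k s t \<le> BS_profile k s (d1 k s)"
      using BS_profile_mono[where p = "d1 k s" and v = "d1 k s"] d1 assms by simp
  next
    case False
    then show "BS_profile k s t \<le> BS_profile k s (d1 k s)"
      using BS_profile_antimono[where p = "d1 k s" and u = "d1 k s"] d1 assms by simp
  qed
qed

section \<open>The upper bound \<open>H\<close>\<close>

lemma H_arg_bounds:
  fixes k c D :: real
  assumes "0 \<le> k" "c < D" "D < 1" "0 < c"
  shows "0 < (D - c) / exp k" "(D - c) / exp k < 1"
proof -
  have "D - c < 1" "1 \<le> exp k"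
    using assms by auto
  then have "D - c < exp k"
    by linarith
  then show "(D - c) / exp k < 1"
    by simp
qed (use assms in simp)

lemma BS_profile_H:
  assumes "0 \<le> k" "c < D" "D < 1" "0 < c"
  shows "BS_profile k (H k c D) (Phi_inv D) = c"
  using assms H_arg_bounds[OF assms]
  by (simp add: BS_profile_def H_def Phi_Phi_inv)

lemma H_pos:
  assumes "0 \<le> k" "c < D" "D < 1" "0 < c"
  shows "0 < H k c D"
proof -
  have "Phi (Phi_inv D - H k c D) \<le> exp k * Phi (Phi_inv D - H k c D)"
    using assms(1) Phi_pos by simp
  also have "\<dots> < Phi (Phi_inv D)"
    using BS_profile_H[OF assms] \<open>0 < c\<close> by (simp add: BS_profile_def)
  finally show ?thesis
    by (simp add: Phi_less_iff)
qed

lemma sigma_le_H: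
  assumes "0 \<le> k" "0 < c" "c < D" "D < 1" and "0 < \<sigma>" "C_BS k \<sigma> = c"
  shows "\<sigma> \<le> H k c D"
proof (rule ccontr)
  assume "\<not> \<sigma> \<le> H k c D"
  then have "H k c D < \<sigma>"
    by simp
  have "c = BS_profile k (H k c D) (Phi_inv D)"
    using BS_profile_H assms by simp
  also have "\<dots> < BS_profile k \<sigma> (Phi_inv D)"
    using \<open>H k c D < \<sigma>\<close> by (rule BS_profile_strict_mono_volatility)
  also have "\<dots> \<le> C_BS k \<sigma>"
    using \<open>0 < \<sigma>\<close> by (rule BS_profile_le_C_BS)
  finally show False
    using assms by simp
qed

text \<open>Once the profile through \<open>(\<Phi>\<^sup>-\<^sup>1(D\<^sub>0), H(D\<^sub>0))\<close> is past its peak, moving \<open>D\<close> to the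
  right cannot lower \<open>H\<close>; with \<open>x = \<Phi>\<^sup>-\<^sup>1(D\<^sub>0)\<close>, \<open>y = x - H(D\<^sub>0)\<close> that is the condition below.\<close>

lemma H_mono:
  assumes "0 \<le> k" "0 < c" "c < D0" "D0 \<le> D1" "D1 < 1"
    and "(Phi_inv ((D0 - c) / exp k))\<^sup>2 \<le> (Phi_inv D0)\<^sup>2 + 2 * k"
  shows "H k c D0 \<le> H k c D1"
proof (rule ccontr)
  define s where "s = H k c D0"
  assume "\<not> H k c D0 \<le> H k c D1"
  then have "H k c D1 < s"
    by (simp add: s_def)
  have "c = BS_profile k (H k c D1) (Phi_inv D1)"
    using BS_profile_H assms by simp
  also have "\<dots> < BS_profile k s (Phi_inv D1)"
    using \<open>H k c D1 < s\<close> by (rule BS_profile_strict_mono_volatility)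
  also have "\<dots> \<le> BS_profile k s (Phi_inv D0)"
  proof (rule BS_profile_antimono)
    show "0 \<le> s"
      unfolding s_def by (rule less_imp_le, rule H_pos) (use assms in auto)
    have "Phi_inv ((D0 - c) / exp k) = Phi_inv D0 - s"
      by (simp add: s_def H_def)
    moreover have "(Phi_inv D0 - s)\<^sup>2 = (Phi_inv D0)\<^sup>2 - 2 * Phi_inv D0 * s + s\<^sup>2"
      by (simp add: power2_diff)
    ultimately show "s\<^sup>2 \<le> 2 * k + 2 * Phi_inv D0 * s"
      using assms(6) by simp
    show "Phi_inv D0 \<le> Phi_inv D1"
      using assms by (intro Phi_inv_mono) auto
  qed simp
  also have "\<dots> = c"
    using BS_profile_H assms s_def by simp
  finally show False
    by simp
qed

section \<open>A Mills-ratio bound\<close>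

lemma has_real_derivative_std_normal_density:
  "(std_normal_density has_real_derivative - x * std_normal_density x) (at x)"
proof -
  have "((\<lambda>x. exp (- x\<^sup>2 / 2)) has_real_derivative exp (- x\<^sup>2 / 2) * (- (2 * x) / 2)) (at x)"
    by (auto intro!: derivative_eq_intros)
  from DERIV_cmult[OF this, of "1 / sqrt (2 * pi)"] show ?thesis
    unfolding std_normal_density_def by (simp add: algebra_simps)
qed

lemma mult_Phi_minus_le_std_normal_density:
  assumes "0 \<le> z"
  shows "z * Phi (- z) \<le> std_normal_density z"
proof (cases "z = 0")
  case False
  then have "0 < z"
    using assms by simp
  define u where "u y = std_normal_density y / y - Phi (- y)" for y
  have u_antimono: "u y \<le> u z" if "z \<le> y" for y
  proof (rule DERIV_nonpos_imp_nonincreasing[OF that])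
    fix t
    assume "z \<le> t"
    with \<open>0 < z\<close> have "0 < t"
      by simp
    then have "(u has_real_derivative - std_normal_density t / t\<^sup>2) (at t)"
      unfolding u_def [abs_def]
      by (auto intro!: derivative_eq_intros has_real_derivative_std_normal_density
          simp: power2_eq_square field_simps)
    then show "\<exists>d. (u has_real_derivative d) (at t) \<and> d \<le> 0"
      by (auto simp: std_normal_density_pos less_imp_le)
  qed
  have "((\<lambda>y. std_normal_density y / y) \<longlongrightarrow> 0) at_top"
    unfolding std_normal_density_def by real_asymp
  moreover have "((\<lambda>y. Phi (- y)) \<longlongrightarrow> 0) at_top"
    by (rule filterlim_compose[OF tendsto_Phi_at_bot filterlim_uminus_at_bot_at_top])
  ultimately have "(u \<longlongrightarrow> 0) at_top"
    unfolding u_def [abs_def] using tendsto_diff by fastforce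
  then have "0 \<le> u z"
    by (rule tendsto_upperbound) (auto simp: eventually_at_top_linorder intro: u_antimono)
  then show ?thesis
    using \<open>0 < z\<close> by (simp add: u_def field_simps)
qed simp

lemma exp_mult_Phi_minus_antimono:
  assumes "0 \<le> t" "t \<le> r"
  shows "exp (r\<^sup>2 / 2) * Phi (- r) \<le> exp (t\<^sup>2 / 2) * Phi (- t)"
proof (rule DERIV_nonpos_imp_nonincreasing[OF \<open>t \<le> r\<close>])
  fix z
  assume "t \<le> z"
  have "((\<lambda>z. exp (z\<^sup>2 / 2) * Phi (- z)) has_real_derivative
      exp (z\<^sup>2 / 2) * (z * Phi (- z) - std_normal_density z)) (at z)"
    by (auto intro!: derivative_eq_intros simp: algebra_simps)
  moreover have "exp (z\<^sup>2 / 2) * (z * Phi (- z) - std_normal_density z) \<le> 0"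
    using mult_Phi_minus_le_std_normal_density[of z] \<open>t \<le> z\<close> assms
    by (simp add: mult_nonneg_nonpos)
  ultimately show "\<exists>d. ((\<lambda>z. exp (z\<^sup>2 / 2) * Phi (- z)) has_real_derivative d) (at z) \<and> d \<le> 0"
    by blast
qed

lemma sq_le_of_exp_mult_Phi_eq_Phi_minus:
  assumes "0 \<le> x" "0 \<le> k" "exp k * Phi y = Phi (- x)"
  shows "y\<^sup>2 \<le> x\<^sup>2 + 2 * k"
proof -
  define r where "r = sqrt (x\<^sup>2 + 2 * k)"
  have r2: "r\<^sup>2 = x\<^sup>2 + 2 * k"
    using assms by (simp add: r_def)
  have "x \<le> r"
    using assms by (simp add: r_def real_le_rsqrt)
  have "exp (x\<^sup>2 / 2) * (exp k * Phi (- r)) = exp (r\<^sup>2 / 2) * Phi (- r)"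
    by (simp add: r2 add_divide_distrib exp_add)
  also have "\<dots> \<le> exp (x\<^sup>2 / 2) * Phi (- x)"
    using \<open>0 \<le> x\<close> \<open>x \<le> r\<close> by (rule exp_mult_Phi_minus_antimono)
  finally have "exp k * Phi (- r) \<le> exp k * Phi y"
    using assms(3) by simp
  then have "- r \<le> y"
    by (simp add: Phi_le_iff)
  have "Phi y \<le> exp k * Phi y"
    using assms(2) Phi_pos[of y] by simp
  then have "y \<le> - x"
    using assms(3) Phi_le_iff[of y "- x"] by simp
  with \<open>- r \<le> y\<close> assms(1) have "y\<^sup>2 \<le> r\<^sup>2"
    by (intro power2_le_iff_abs_le[THEN iffD2]) auto
  then show ?thesis
    by (simp add: r2)
qed

section \<open>The two candidate points\<close>

lemma H_eq_U2: "H k c (c + exp k * Phi (- sqrt (2 * k))) = U2 k c"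
  by (simp add: H_def U2_def)

lemma H_eq_U3:
  assumes "0 < c" "c < 1"
  shows "H k c ((1 + c) / 2) = U3 k c"
proof -
  have "Phi_inv ((1 + c) / 2) = - Phi_inv ((1 - c) / 2)"
    using Phi_inv_one_minus[of "(1 - c) / 2"] assms by (simp add: field_simps)
  moreover have "((1 + c) / 2 - c) / exp k = (1 - c) / (2 * exp k)"
    by (simp add: field_simps)
  ultimately show ?thesis
    by (simp add: H_def U3_def)
qed

lemma H_U2_point_le:
  assumes "0 \<le> k" "0 < c" "c + exp k * Phi (- sqrt (2 * k)) \<le> D" "D < 1"
  shows "H k c (c + exp k * Phi (- sqrt (2 * k))) \<le> H k c D"
proof (rule H_mono)
  show "c < c + exp k * Phi (- sqrt (2 * k))"
    by (simp add: Phi_pos)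
  show "(Phi_inv ((c + exp k * Phi (- sqrt (2 * k)) - c) / exp k))\<^sup>2
      \<le> (Phi_inv (c + exp k * Phi (- sqrt (2 * k))))\<^sup>2 + 2 * k"
    using assms(1) by simp
qed (use assms in auto)

lemma H_U3_point_le:
  assumes "0 \<le> k" "0 < c" "c < 1" "(1 + c) / 2 \<le> D" "D < 1"
  shows "H k c ((1 + c) / 2) \<le> H k c D"
proof (rule H_mono)
  define x where "x = Phi_inv ((1 + c) / 2)"
  define y where "y = Phi_inv (((1 + c) / 2 - c) / exp k)"
  have x_nonneg: "0 \<le> x"
    using Phi_inv_mono[of "1 / 2" "(1 + c) / 2"] Phi_inv_one_minus[of "1 / 2"] assms
    by (simp add: x_def)
  txt \<open>At this point \<open>D - c = 1 - D\<close>, and \<open>1 - D = \<Phi>(-x)\<close> by symmetry.\<close>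
  have "exp k * Phi y = Phi (- x)"
    using H_arg_bounds[of k c "(1 + c) / 2"] Phi_inv_one_minus[of "(1 - c) / 2"] assms
    by (simp add: x_def y_def Phi_Phi_inv field_simps)
  with x_nonneg \<open>0 \<le> k\<close> show "y\<^sup>2 \<le> x\<^sup>2 + 2 * k"
    by (rule sq_le_of_exp_mult_Phi_eq_Phi_minus)
qed (use assms in auto)

theorem corollary4p1:
  fixes k c \<sigma> :: real
  assumes "k \<ge> 0" and "0 < c" and "c < 1"
    and "\<sigma> > 0" and "C_BS k \<sigma> = c"
  shows "\<sigma> \<le> U23 k c \<and>
    (c < 1 - exp k * Phi (- sqrt (2 * k)) \<longrightarrow> U23 k c = min (U2 k c) (U3 k c)) \<and>
    (\<not> (c < 1 - exp k * Phi (- sqrt (2 * k))) \<longrightarrow> U23 k c = U3 k c)"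
proof -
  define a where "a = (1 + c) / 2"
  define b where "b = c + exp k * Phi (- sqrt (2 * k))"
  have U23: "U23 k c = H k c (min a b)"
    by (simp add: U23_def a_def b_def)
  have "c < a" "a < 1" "c < b"
    using assms by (simp_all add: a_def b_def Phi_pos)
  then have "\<sigma> \<le> U23 k c"
    unfolding U23 using assms by (intro sigma_le_H) auto
  moreover have "U23 k c = min (U2 k c) (U3 k c)" if "b < 1"
  proof (cases "a \<le> b")
    case True
    then show ?thesis
      using H_U3_point_le[of k c b] that assms
      by (simp add: U23 a_def b_def H_eq_U2 H_eq_U3 min_def)
  next
    case False
    then show ?thesis
      using H_U2_point_le[of k c a] assms
      by (simp add: U23 a_def b_def H_eq_U2 H_eq_U3 min_def)
  qed
  moreover have "U23 k c = U3 k c" if "1 \<le> b"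
    using that \<open>a < 1\<close> assms by (simp add: U23 min_def a_def H_eq_U3)
  ultimately show ?thesis
    by (auto simp: b_def)
qed

end
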